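(* $Lex_{AB}$ is not universal: there is an epistemic space $\mathbb{S}$ that is identifiable in the limit but is not identifiable in the limit by $Lex_{AB}$.
   Context: An epistemic space is a pair $\mathbb{S}=(S,\mathcal{O})$ where $S$ is a non-empty, at most countable set of worlds and $\mathcal{O}\subseteq\mathcal{P}(S)$ is a set of observables. A data stream is an infinite sequence $\vec O=(O_0,O_1,\ldots)$ of elements of $\mathcal{O}$; $\vec O[n]=(O_0,\ldots,O_{n-1})$; it is sound for $s$ if $s\in O_n$ for all $n$ and complete for $s$ if every $O\in\mathcal{O}$ with $s\in O$ occurs in it. $\mathbb{S}$ is identifiable in the limit if some learner (map from finite sequences to subsets of $S$) outputs $\{s\}$ on all sufficiently long initial segments of every stream sound and complete for $s$, for every $s\in S$. A plausibility space is $\mathbb{B}=(S,\mathcal{O},\preceq)$, $\preceq$ a total preorder on $S$; $\min_\preceq X$ is the set of $\preceq$-minimal elements of $X$. Lexicographic revision: for $p\subseteq S$, $\bar p=S\setminus p$, $Lex_1(\mathbb{B},p)=(S,\mathcal{O},\preceq')$ with $t\preceq' w$ iff ($t,w\in p$ and $t\preceq w$) or ($t,w\in\bar p$ and $t\preceq w$) or ($t\in p$, $w\notin p$). Upgrade: for a preorder $\preceq$ on $S$ and $x\in S$, ${\preceq}\uparrow x=({\preceq}\cap((S\setminus\{x\})\times(S\setminus\{x\})))\cup\{(x,s)\mid s\in S\setminus\{x\}\}$. Anchored lexicographic revision: if $Lex_1(\mathbb{B},p)=(S,\mathcal{O},\preceq')$, then $Lex^+_1(\mathbb{B},p)=(S,\mathcal{O},\preceq')$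 if $|\min_{\preceq'}S|=1$, and otherwise $Lex^+_1(\mathbb{B},p)=(S,\mathcal{O},{\preceq'}\uparrow x)$ for some (randomly chosen) $x\in\min_{\preceq'}S$. The anchoring-biased method: $Lex_{AB}(\mathbb{B},\lambda)=\mathbb{B}$ and $Lex_{AB}(\mathbb{B},\sigma\cdot p)=Lex^+_1(Lex_{AB}(\mathbb{B},\sigma),\min_{\preceq_{AB}}(S\cap p))$, where $Lex_{AB}(\mathbb{B},\sigma)=(S,\mathcal{O},\preceq_{AB})$. Its conjecture on $\sigma$ is the set of minimal worlds of $Lex_{AB}((S,\mathcal{O},\preceq),\sigma)$. $\mathbb{S}$ is identifiable in the limit by $Lex_{AB}$ if there is a total preorder $\preceq$ on $S$ such that for every $s\in S$, every stream sound and complete for $s$, and every resolution of the random choices, the conjecture on $\vec O[n]$ is $\{s\}$ for all sufficiently large $n$. *)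

theory Defs
  imports Main "HOL-Library.Countable_Set"
begin

definition epistemic_space :: "'w set \<Rightarrow> 'w set set \<Rightarrow> bool" where
  "epistemic_space S Ob \<longleftrightarrow> S \<noteq> {} \<and> countable S \<and> Ob \<subseteq> Pow S"

definition data_stream :: "'w set set \<Rightarrow> (nat \<Rightarrow> 'w set) \<Rightarrow> bool" where
  "data_stream Ob D \<longleftrightarrow> (\<forall>n. D n \<in> Ob)"

definition sound_for :: "(nat \<Rightarrow> 'w set) \<Rightarrow> 'w \<Rightarrow> bool" where
  "sound_for D s \<longleftrightarrow> (\<forall>n. s \<in> D n)"

definition complete_for :: "'w set set \<Rightarrow> (nat \<Rightarrow> 'w set) \<Rightarrow> 'w \<Rightarrow> bool" where
  "complete_for Ob D s \<longleftrightarrow> (\<forall>X\<in>Ob. s \<in> X \<longrightarrow> (\<exists>n. D n = X))"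

definition init_seg :: "(nat \<Rightarrow> 'w set) \<Rightarrow> nat \<Rightarrow> 'w set list" where
  "init_seg D n = map D [0..<n]"

definition identifiable :: "'w set \<Rightarrow> 'w set set \<Rightarrow> bool" where
  "identifiable S Ob \<longleftrightarrow>
     (\<exists>L :: 'w set list \<Rightarrow> 'w set. \<forall>s\<in>S. \<forall>D. data_stream Ob D \<and> sound_for D s \<and> complete_for Ob D s
        \<longrightarrow> (\<exists>N. \<forall>n\<ge>N. L (init_seg D n) = {s}))"

text \<open>Preorders are relations on S (pairs (t,w) meaning t \<preceq> w).\<close>
definition total_preorder_on :: "'w set \<Rightarrow> 'w rel \<Rightarrow> bool" where
  "total_preorder_on S r \<longleftrightarrow> r \<subseteq> S \<times> S \<and> preorder_on S r \<and> total_on S r"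

definition minset :: "'w rel \<Rightarrow> 'w set \<Rightarrow> 'w set" where
  "minset r X = {x \<in> X. \<forall>y\<in>X. (y, x) \<in> r \<longrightarrow> (x, y) \<in> r}"

definition lex1 :: "'w set \<Rightarrow> 'w rel \<Rightarrow> 'w set \<Rightarrow> 'w rel" where
  "lex1 S r p = {(t, w). t \<in> S \<and> w \<in> S \<and>
      ((t \<in> p \<and> w \<in> p \<and> (t, w) \<in> r) \<or> (t \<notin> p \<and> w \<notin> p \<and> (t, w) \<in> r) \<or> (t \<in> p \<and> w \<notin> p))}"

definition upgrade :: "'w set \<Rightarrow> 'w rel \<Rightarrow> 'w \<Rightarrow> 'w rel" where
  "upgrade S r x = (r \<inter> ((S - {x}) \<times> (S - {x}))) \<union> {(x, s) | s. s \<in> S - {x}}"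

text \<open>The random choice is resolved by a choice
  function ch, which receives the current history and the set of minimal worlds.
  (If there are no minimal worlds, no anchoring is possible and the order is left unchanged.)\<close>
definition lex_plus :: "'w set \<Rightarrow> 'w rel \<Rightarrow> 'w set \<Rightarrow> 'w \<Rightarrow> 'w rel" where
  "lex_plus S r p x =
     (let r' = lex1 S r p; M = minset r' S in
      if card M = 1 \<or> M = {} then r' else upgrade S r' x)"

primrec lexab_rev :: "'w set \<Rightarrow> 'w rel \<Rightarrow> ('w set list \<Rightarrow> 'w set \<Rightarrow> 'w) \<Rightarrow> 'w set list \<Rightarrow> 'w rel" where
  "lexab_rev S r ch [] = r"
| "lexab_rev S r ch (p # \<tau>) =
     (let q = lexab_rev S r ch \<tau>; r' = lex1 S q (minset q (S \<inter> p)) in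
      lex_plus S q (minset q (S \<inter> p)) (ch (rev (p # \<tau>)) (minset r' S)))"

definition lexab :: "'w set \<Rightarrow> 'w rel \<Rightarrow> ('w set list \<Rightarrow> 'w set \<Rightarrow> 'w) \<Rightarrow> 'w set list \<Rightarrow> 'w rel" where
  "lexab S r ch \<sigma> = lexab_rev S r ch (rev \<sigma>)"

definition valid_choice :: "('w set list \<Rightarrow> 'w set \<Rightarrow> 'w) \<Rightarrow> bool" where
  "valid_choice ch \<longleftrightarrow> (\<forall>\<sigma> X. X \<noteq> {} \<longrightarrow> ch \<sigma> X \<in> X)"

definition lexab_identifiable :: "'w set \<Rightarrow> 'w set set \<Rightarrow> bool" where
  "lexab_identifiable S Ob \<longleftrightarrow>
     (\<exists>r. total_preorder_on S r \<and>
        (\<forall>s\<in>S. \<forall>D. data_stream Ob D \<and> sound_for D s \<and> complete_for Ob D s \<longrightarrow>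
           (\<forall>ch. valid_choice ch \<longrightarrow>
              (\<exists>N. \<forall>n\<ge>N. minset (lexab S r ch (init_seg D n)) S = {s}))))"

end

theory Submission
  imports Defs
begin

text \<open>
  Each of the worlds 0, 1, 2 is determined by which of the observables {0, 1} and {0, 2} it
  satisfies, so the space is identifiable. For Lex_AB, distinguish two cases on the prior.
  If it ranks 0 at least as plausible as some a \<in> {1, 2}, then on the stream {0, a}, {0, a}, ...
  world 0 is always among the most plausible worlds of the observation, so it is promoted and
  may be chosen as the anchor every time; it stays minimal and a is never conjectured.
  Otherwise 1 and 2 are both strictly more plausible than 0. Every observation contains one of
  them, so 0 is never promoted and never chosen as the anchor, the ranking of 1 and 2 above 0
  persists, and 0 is never conjectured on a stream for 0, whatever the anchoring.
\<close>

lemma lexab_init_seg_Suc: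
  "lexab S r ch (init_seg D (Suc n)) =
    (let q = lexab S r ch (init_seg D n); P = minset q (S \<inter> D n) in
     lex_plus S q P (ch (init_seg D (Suc n)) (minset (lex1 S q P) S)))"
  unfolding lexab_def init_seg_def by (simp add: Let_def)

definition least_world :: "'w set \<Rightarrow> 'w rel \<Rightarrow> 'w \<Rightarrow> bool" where
  "least_world X r x \<longleftrightarrow> x \<in> X \<and> (\<forall>y\<in>X. y \<noteq> x \<longrightarrow> (x, y) \<in> r)"

lemma least_world_in_minset: "least_world X r x \<Longrightarrow> x \<in> minset r X"
  unfolding least_world_def minset_def by auto

lemma least_world_lex1:
  assumes "x \<in> S" and "least_world P q x"
  shows "least_world S (lex1 S q P) x"
  using assms unfolding least_world_def lex1_def by auto

lemma least_world_upgrade: "x \<in> S \<Longrightarrow> least_world S (upgrade S r x) x"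
  unfolding least_world_def upgrade_def by auto

lemma least_world_lex_plus:
  assumes least: "least_world (S \<inter> p) q x"
    and choice: "x \<in> minset (lex1 S q (minset q (S \<inter> p))) S \<Longrightarrow> c = x"
  shows "least_world S (lex_plus S q (minset q (S \<inter> p)) c) x"
proof -
  have "least_world (minset q (S \<inter> p)) q x"
    using least least_world_in_minset[OF least] unfolding least_world_def minset_def by auto
  moreover have "x \<in> S" using least unfolding least_world_def by simp
  ultimately have lex: "least_world S (lex1 S q (minset q (S \<inter> p))) x"
    by (rule least_world_lex1[rotated])
  then have "c = x" by (intro choice least_world_in_minset)
  then show ?thesis
    using lex least_world_upgrade[of x S] least unfolding lex_plus_def Let_def least_world_def
    by auto
qed

lemma least_world_lexab:
  assumes x: "\<And>n. x \<in> D n" and prior: "least_world (S \<inter> D 0) r x"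
    and choice: "\<And>\<sigma> X. x \<in> X \<Longrightarrow> ch \<sigma> X = x"
  shows "least_world S (lexab S r ch (init_seg D (Suc n))) x"
proof (induction n)
  case 0
  then show ?case
    using least_world_lex_plus[OF prior choice]
    by (simp add: lexab_init_seg_Suc init_seg_def lexab_def)
next
  case (Suc n)
  then have "least_world (S \<inter> D (Suc n)) (lexab S r ch (init_seg D (Suc n))) x"
    using x unfolding least_world_def by auto
  from least_world_lex_plus[OF this choice] show ?case
    by (simp add: lexab_init_seg_Suc[of S r ch D "Suc n"] Let_def)
qed

definition strictly_below :: "'w rel \<Rightarrow> 'w \<Rightarrow> 'w \<Rightarrow> bool" where
  "strictly_below r w z \<longleftrightarrow> (w, z) \<in> r \<and> (z, w) \<notin> r"

lemma strictly_below_not_in_minset: "w \<in> X \<Longrightarrow> strictly_below r w z \<Longrightarrow> z \<notin> minset r X"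
  unfolding strictly_below_def minset_def by auto

lemma strictly_below_lex1:
  assumes "w \<in> S" "z \<in> S" "strictly_below q w z" "z \<in> P \<Longrightarrow> w \<in> P"
  shows "strictly_below (lex1 S q P) w z"
  using assms unfolding strictly_below_def lex1_def by auto

lemma strictly_below_upgrade:
  assumes "w \<in> S" "z \<in> S" "strictly_below r w z" "c \<noteq> z"
  shows "strictly_below (upgrade S r c) w z"
  using assms unfolding strictly_below_def upgrade_def by auto

lemma strictly_below_lex_plus:
  fixes S p W :: "'w set" and q :: "'w rel"
  defines "P \<equiv> minset q (S \<inter> p)"
  assumes W: "W \<subseteq> S" "W \<inter> p \<noteq> {}" and z: "z \<in> S"
    and below: "\<forall>w\<in>W. strictly_below q w z"
    and choice: "minset (lex1 S q P) S \<noteq> {} \<Longrightarrow> c \<in> minset (lex1 S q P) S"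
  shows "\<forall>w\<in>W. strictly_below (lex_plus S q P c) w z"
proof -
  obtain w0 where w0: "w0 \<in> W" "w0 \<in> p" using W by blast
  have "z \<notin> P"
    unfolding P_def using w0 W below by (intro strictly_below_not_in_minset) auto
  then have lex: "\<forall>w\<in>W. strictly_below (lex1 S q P) w z"
    using W z below by (auto intro: strictly_below_lex1)
  then have "z \<notin> minset (lex1 S q P) S"
    using w0 W by (intro strictly_below_not_in_minset) auto
  then have "minset (lex1 S q P) S \<noteq> {} \<Longrightarrow> c \<noteq> z" using choice by blast
  then show ?thesis
    using lex W z unfolding lex_plus_def Let_def by (auto intro: strictly_below_upgrade)
qed

lemma strictly_below_lexab:
  assumes W: "W \<subseteq> S" "\<And>n. W \<inter> D n \<noteq> {}" and z: "z \<in> S"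
    and prior: "\<forall>w\<in>W. strictly_below r w z" and ch: "valid_choice ch"
  shows "\<forall>w\<in>W. strictly_below (lexab S r ch (init_seg D n)) w z"
proof (induction n)
  case 0
  then show ?case using prior by (simp add: lexab_def init_seg_def)
next
  case (Suc n)
  with strictly_below_lex_plus[OF W(1) W(2)[of n] z] ch show ?case
    unfolding valid_choice_def by (simp add: lexab_init_seg_Suc Let_def)
qed

definition lexab_identifies :: "'w set \<Rightarrow> 'w set set \<Rightarrow> 'w rel \<Rightarrow> bool" where
  "lexab_identifies S Ob r \<longleftrightarrow>
     (\<forall>s D ch. s \<in> S \<longrightarrow> data_stream Ob D \<longrightarrow> sound_for D s \<longrightarrow> complete_for Ob D s \<longrightarrow>
        valid_choice ch \<longrightarrow> (\<exists>N. \<forall>n\<ge>N. minset (lexab S r ch (init_seg D n)) S = {s}))"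

lemma lexab_identifiable_iff:
  "lexab_identifiable S Ob \<longleftrightarrow> (\<exists>r. total_preorder_on S r \<and> lexab_identifies S Ob r)"
  unfolding lexab_identifiable_def lexab_identifies_def by blast

lemma lexab_identifiesD:
  "lexab_identifies S Ob r \<Longrightarrow> s \<in> S \<Longrightarrow> data_stream Ob D \<Longrightarrow> sound_for D s \<Longrightarrow>
    complete_for Ob D s \<Longrightarrow> valid_choice ch \<Longrightarrow>
    \<exists>N. \<forall>n\<ge>N. minset (lexab S r ch (init_seg D n)) S = {s}"
  unfolding lexab_identifies_def by blast

definition choose_preferring :: "'w \<Rightarrow> 'w set list \<Rightarrow> 'w set \<Rightarrow> 'w" where
  "choose_preferring x \<sigma> X = (if x \<in> X then x else SOME y. y \<in> X)"

lemma valid_choice_choose_preferring: "valid_choice (choose_preferring x)"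
  unfolding valid_choice_def choose_preferring_def by (auto intro: someI_ex)

lemma set_init_seg_eventually_observables:
  assumes "finite Ob" "data_stream Ob D" "sound_for D s" "complete_for Ob D s"
  shows "\<exists>N. \<forall>n\<ge>N. set (init_seg D n) = {X \<in> Ob. s \<in> X}"
proof -
  have occurs: "\<forall>X\<in>{X \<in> Ob. s \<in> X}. \<exists>k. D k = X"
    using assms(4) unfolding complete_for_def by blast
  obtain idx where idx: "\<forall>X\<in>{X \<in> Ob. s \<in> X}. D (idx X) = X"
    using bchoice[OF occurs] by blast
  have "finite (idx ` {X \<in> Ob. s \<in> X})" using assms(1) by simp
  then obtain N where N: "\<forall>k\<in>idx ` {X \<in> Ob. s \<in> X}. k < N"
    using finite_nat_set_iff_bounded by blast
  have "set (init_seg D n) = {X \<in> Ob. s \<in> X}" if "N \<le> n" for n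
  proof
    show "set (init_seg D n) \<subseteq> {X \<in> Ob. s \<in> X}"
      using assms(2,3) unfolding init_seg_def data_stream_def sound_for_def by auto
    show "{X \<in> Ob. s \<in> X} \<subseteq> set (init_seg D n)"
    proof
      fix X assume "X \<in> {X \<in> Ob. s \<in> X}"
      then have "X = D (idx X)" "idx X \<in> {0..<n}" using idx N that by auto
      then show "X \<in> set (init_seg D n)" unfolding init_seg_def by simp
    qed
  qed
  then show ?thesis by blast
qed

lemma identifiable_if_observables_separate:
  assumes "finite Ob" and separate: "inj_on (\<lambda>w. {X \<in> Ob. w \<in> X}) S"
  shows "identifiable S Ob"
proof -
  define L where "L \<sigma> = {w \<in> S. {X \<in> Ob. w \<in> X} = set \<sigma>}" for \<sigma>
  have "\<exists>N. \<forall>n\<ge>N. L (init_seg D n) = {s}"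
    if s: "s \<in> S" and D: "data_stream Ob D" "sound_for D s" "complete_for Ob D s" for s D
  proof -
    obtain N where "\<forall>n\<ge>N. set (init_seg D n) = {X \<in> Ob. s \<in> X}"
      using set_init_seg_eventually_observables[OF \<open>finite Ob\<close> D] by blast
    moreover have "{w \<in> S. {X \<in> Ob. w \<in> X} = {X \<in> Ob. s \<in> X}} = {s}"
      using \<open>s \<in> S\<close> separate unfolding inj_on_def by blast
    ultimately have "\<forall>n\<ge>N. L (init_seg D n) = {s}" unfolding L_def by simp
    then show ?thesis by blast
  qed
  then show ?thesis unfolding identifiable_def by blast
qed

definition fork_worlds :: "nat set" where
  "fork_worlds = {0, 1, 2}"

definition fork_observables :: "nat set set" where
  "fork_observables = {{0, 1}, {0, 2}}"

lemma epistemic_space_fork: "epistemic_space fork_worlds fork_observables"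
  unfolding epistemic_space_def fork_worlds_def fork_observables_def by auto

lemma identifiable_fork: "identifiable fork_worlds fork_observables"
  unfolding fork_worlds_def fork_observables_def
proof (rule identifiable_if_observables_separate)
  have "1 \<in> {0, 1 :: nat}" "1 \<notin> {0, 2 :: nat}" by simp_all
  then have ne: "{0, 1} \<noteq> {0, 2 :: nat}" by blast
  then have obs:
    "{X \<in> {{0, 1}, {0, 2}}. (0 :: nat) \<in> X} = {{0, 1}, {0, 2}}"
    "{X \<in> {{0, 1}, {0, 2}}. (1 :: nat) \<in> X} = {{0, 1}}"
    "{X \<in> {{0, 1}, {0, 2}}. (2 :: nat) \<in> X} = {{0, 2}}"
    by auto
  show "inj_on (\<lambda>w. {X \<in> {{0, 1}, {0, 2}}. w \<in> X}) {0, 1, 2 :: nat}"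
    by (simp only: inj_on_def ball_simps obs) (use ne in auto)
qed simp

lemma lexab_identifies_fork_ranks_zero_last:
  assumes r: "total_preorder_on fork_worlds r"
    and identifies: "lexab_identifies fork_worlds fork_observables r"
  shows "\<forall>w\<in>{1, 2}. strictly_below r w 0"
proof -
  let ?S = fork_worlds and ?ch = "choose_preferring (0 :: nat)"
  have zero_not_below: "(0, a) \<notin> r" if a: "a \<in> {1, 2}" for a
  proof
    assume "(0, a) \<in> r"
    define D :: "nat \<Rightarrow> nat set" where "D n = {0, a}" for n
    have "a \<in> ?S" "data_stream fork_observables D" "sound_for D a"
      "complete_for fork_observables D a"
      using a by (auto simp: fork_worlds_def fork_observables_def D_def data_stream_def
          sound_for_def complete_for_def)
    from lexab_identifiesD[OF identifies this valid_choice_choose_preferring] obtain N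
      where N: "\<forall>n\<ge>N. minset (lexab ?S r ?ch (init_seg D n)) ?S = {a}"
      by blast
    have "least_world ?S (lexab ?S r ?ch (init_seg D (Suc N))) 0"
      by (rule least_world_lexab)
        (use \<open>(0, a) \<in> r\<close> a in \<open>auto simp: fork_worlds_def D_def least_world_def
          choose_preferring_def\<close>)
    then have "0 \<in> minset (lexab ?S r ?ch (init_seg D (Suc N))) ?S"
      by (rule least_world_in_minset)
    then show False using N a by auto
  qed
  have "(w, 0) \<in> r" if "w \<in> {1, 2}" for w
    using r zero_not_below[OF that] that
    unfolding total_preorder_on_def total_on_def fork_worlds_def by auto
  then show ?thesis
    using zero_not_below unfolding strictly_below_def by blast
qed

lemma not_lexab_identifies_fork_if_zero_last:
  assumes prior: "\<forall>w\<in>{1, 2}. strictly_below r w 0"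
  shows "\<not> lexab_identifies fork_worlds fork_observables r"
proof
  let ?S = fork_worlds and ?ch = "choose_preferring (0 :: nat)"
  assume identifies: "lexab_identifies ?S fork_observables r"
  define D :: "nat \<Rightarrow> nat set" where "D n = (if even n then {0, 1} else {0, 2})" for n
  have stream: "0 \<in> ?S" "data_stream fork_observables D" "sound_for D 0"
    by (simp_all add: fork_worlds_def fork_observables_def D_def data_stream_def sound_for_def)
  have "D 0 = {0, 1}" "D 1 = {0, 2}" by (simp_all add: D_def)
  then have "complete_for fork_observables D 0"
    unfolding complete_for_def fork_observables_def by blast
  from lexab_identifiesD[OF identifies stream this valid_choice_choose_preferring] obtain N
    where N: "\<forall>n\<ge>N. minset (lexab ?S r ?ch (init_seg D n)) ?S = {0}"
    by blast
  have "{1, 2} \<inter> D n \<noteq> {}" for n by (simp add: D_def)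
  then have "\<forall>w\<in>{1, 2}. strictly_below (lexab ?S r ?ch (init_seg D N)) w 0"
    by (intro strictly_below_lexab prior valid_choice_choose_preferring)
      (simp_all add: fork_worlds_def)
  then have "strictly_below (lexab ?S r ?ch (init_seg D N)) 1 0"
    by simp
  moreover have "(1 :: nat) \<in> ?S" by (simp add: fork_worlds_def)
  ultimately have "0 \<notin> minset (lexab ?S r ?ch (init_seg D N)) ?S"
    by (intro strictly_below_not_in_minset)
  moreover have "minset (lexab ?S r ?ch (init_seg D N)) ?S = {0}"
    using N by simp
  ultimately show False by simp
qed

lemma not_lexab_identifiable_fork: "\<not> lexab_identifiable fork_worlds fork_observables"
  using lexab_identifies_fork_ranks_zero_last not_lexab_identifies_fork_if_zero_last
  unfolding lexab_identifiable_iff by blast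

theorem mainTheorem7:
  shows "\<exists>(S :: nat set) Ob. epistemic_space S Ob \<and> identifiable S Ob \<and> \<not> lexab_identifiable S Ob"
  using epistemic_space_fork identifiable_fork not_lexab_identifiable_fork by blast

end
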